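(* In the setting of the context (an agent running fixed-parameter $\mathrm{EXPN}$ with $b$ neighbors whose distributions satisfy $q^i_j(t)\ge\varepsilon_i/K$ for all $i,j,t$), for every time $t$, $$\sum_{j=1}^K\frac{p_j(t)}{p'_j(t)}\le \frac{1}{1-\left(1-\frac1K\right)\Theta}+1=\beta,\qquad\text{where }\Theta=\prod_{i=1}^b\left(1-\frac{\varepsilon_i}{K}\right).$$
   Context: There are $K$ arms. An agent has $b$ neighbors; at time $t$ neighbor $i$ selects an arm according to a probability distribution $q^i(t)=(q^i_1(t),\dots,q^i_K(t))$ satisfying $q^i_j(t)\ge\varepsilon_i/K$ for all arms $j$, with $\varepsilon_i\in(0,1]$. The agent selects arms according to the probability distribution $p(t)$ of the fixed-parameter $\mathrm{EXPN}$ algorithm: with $\eta\in[0,1]$, $\delta>0$, positive weights $w_j(t)$ (with $w_j(1)=1$, $w_j(t+1)=w_j(t)e^{\delta\hat g_j(t)}$ for nonnegative reward estimates $\hat g_j(t)$), $W_t=\sum_j w_j(t)$, and $p_j(t)=(1-\eta)\frac{w_j(t)}{W_t}+\frac{\eta}{K}$. Here $p'_j(t)=1-(1-p_j(t))\prod_{i=1}^b(1-q^i_j(t))$. *)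

theory Defs
  imports Complex_Main
begin

text \<open>Arms are indexed by 1..K, neighbours by 1..b, time steps by t >= 1.
  ghat j t is the (nonnegative) reward estimate of arm j at time t.\<close>

text \<open>EXPN weights: w_j(1) = 1, w_j(t+1) = w_j(t) * exp(delta * ghat_j(t)).\<close>
definition expn_w :: "(nat \<Rightarrow> nat \<Rightarrow> real) \<Rightarrow> real \<Rightarrow> nat \<Rightarrow> nat \<Rightarrow> real" where
  "expn_w ghat \<delta> j t = (\<Prod>s\<in>{1..<t}. exp (\<delta> * ghat j s))"

definition expn_W :: "nat \<Rightarrow> (nat \<Rightarrow> nat \<Rightarrow> real) \<Rightarrow> real \<Rightarrow> nat \<Rightarrow> real" where
  "expn_W K ghat \<delta> t = (\<Sum>j\<in>{1..K}. expn_w ghat \<delta> j t)"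

definition expn_p :: "nat \<Rightarrow> real \<Rightarrow> real \<Rightarrow> (nat \<Rightarrow> nat \<Rightarrow> real) \<Rightarrow> nat \<Rightarrow> nat \<Rightarrow> real" where
  "expn_p K \<eta> \<delta> ghat j t =
     (1 - \<eta>) * expn_w ghat \<delta> j t / expn_W K ghat \<delta> t + \<eta> / real K"

definition expn_p' :: "nat \<Rightarrow> nat \<Rightarrow> real \<Rightarrow> real \<Rightarrow> (nat \<Rightarrow> nat \<Rightarrow> real)
     \<Rightarrow> (nat \<Rightarrow> nat \<Rightarrow> nat \<Rightarrow> real) \<Rightarrow> nat \<Rightarrow> nat \<Rightarrow> real" where
  "expn_p' K b \<eta> \<delta> ghat q j t =
     1 - (1 - expn_p K \<eta> \<delta> ghat j t) * (\<Prod>i\<in>{1..b}. (1 - q i j t))"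

end

theory Submission
  imports Defs
begin

text \<open>Since every neighbour puts mass at least \<open>\<epsilon>\<^sub>i/K\<close> on each arm,
  \<open>\<Prod>\<^sub>i (1 - q\<^sup>i\<^sub>j) \<le> \<Theta>\<close>, hence \<open>p'\<^sub>j \<ge> (1 - \<Theta>) + \<Theta> p\<^sub>j\<close>.
  The map \<open>p \<mapsto> p / ((1 - \<Theta>) + \<Theta> p)\<close> is concave, so it lies below its tangent
  at the uniform value \<open>1/K\<close>; summing the tangent over a probability vector \<open>p\<close>
  cancels the linear terms and leaves \<open>1 / (1 - (1 - 1/K) \<Theta>)\<close>.\<close>

lemma div_affine_le_tangent:
  fixes a \<theta> p y c :: real
  assumes "0 \<le> a" "0 \<le> \<theta>" "c = a + \<theta> * y" "0 < c" "0 < a + \<theta> * p"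
  shows "p / (a + \<theta> * p) \<le> y / c + a / c\<^sup>2 * (p - y)"
proof -
  have tangent: "y / c + a / c\<^sup>2 * (p - y) = (y * c + a * (p - y)) / c\<^sup>2"
    using \<open>0 < c\<close> by (simp add: field_simps power2_eq_square)
  have "(a + \<theta> * p) * (y * c + a * (p - y)) - p * c\<^sup>2 = \<theta> * a * (p - y)\<^sup>2"
    unfolding \<open>c = a + \<theta> * y\<close> by (simp add: algebra_simps power2_eq_square)
  moreover have "0 \<le> \<theta> * a * (p - y)\<^sup>2"
    using assms by simp
  ultimately have "p * c\<^sup>2 \<le> (a + \<theta> * p) * (y * c + a * (p - y))"
    by linarith
  then show ?thesis
    unfolding tangent using assms by (simp add: field_simps)
qed

lemma sum_div_le_of_affine_lower_bound:
  fixes p d :: "'a \<Rightarrow> real" and \<theta> :: real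
  assumes A: "finite A" "A \<noteq> {}"
    and \<theta>: "0 \<le> \<theta>" "\<theta> \<le> 1"
    and p_pos: "\<And>j. j \<in> A \<Longrightarrow> 0 < p j"
    and p_sum: "sum p A = 1"
    and d_ge: "\<And>j. j \<in> A \<Longrightarrow> 1 - \<theta> + \<theta> * p j \<le> d j"
  shows "(\<Sum>j\<in>A. p j / d j) \<le> 1 / (1 - (1 - 1 / real (card A)) * \<theta>)"
proof -
  define n where "n = real (card A)"
  define a where "a = 1 - \<theta>"
  define c where "c = a + \<theta> * (1 / n)"
  have n_pos: "0 < n"
    using A by (simp add: n_def card_gt_0_iff)
  have a_nonneg: "0 \<le> a"
    using \<theta> by (simp add: a_def)
  have c_pos: "0 < c"
  proof (cases "\<theta> = 0")
    case True
    then show ?thesis by (simp add: c_def a_def)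
  next
    case False
    then have "0 < \<theta> / n" using \<theta> n_pos by simp
    then show ?thesis using a_nonneg by (simp add: c_def)
  qed
  have den_pos: "0 < a + \<theta> * p j" if "j \<in> A" for j
    using \<theta> p_pos[OF that] by (cases "\<theta> = 1") (simp_all add: a_def add_pos_nonneg)
  have "(\<Sum>j\<in>A. p j / d j) \<le> (\<Sum>j\<in>A. 1 / n / c + a / c\<^sup>2 * (p j - 1 / n))"
  proof (rule sum_mono)
    fix j assume j: "j \<in> A"
    have "p j / d j \<le> p j / (a + \<theta> * p j)"
      using d_ge[OF j] den_pos[OF j] p_pos[OF j]
      by (intro divide_left_mono) (auto simp: a_def)
    also have "\<dots> \<le> 1 / n / c + a / c\<^sup>2 * (p j - 1 / n)"
      using a_nonneg \<theta> c_pos den_pos[OF j] by (intro div_affine_le_tangent) (simp_all add: c_def)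
    finally show "p j / d j \<le> 1 / n / c + a / c\<^sup>2 * (p j - 1 / n)" .
  qed
  also have "\<dots> = n * (1 / n / c) + a / c\<^sup>2 * (sum p A - n * (1 / n))"
    by (simp only: sum.distrib sum_distrib_left[symmetric] sum_subtractf sum_constant)
       (simp add: n_def)
  also have "\<dots> = 1 / c"
    using n_pos p_sum by simp
  also have "c = 1 - (1 - 1 / n) * \<theta>"
    by (simp add: c_def a_def algebra_simps)
  finally show ?thesis
    by (simp add: n_def)
qed

lemma expn_w_pos: "0 < expn_w ghat \<delta> j t"
  unfolding expn_w_def by (simp add: prod_pos)

lemma expn_W_pos: "1 \<le> K \<Longrightarrow> 0 < expn_W K ghat \<delta> t"
  unfolding expn_W_def by (intro sum_pos) (auto intro: expn_w_pos)

lemma expn_p_pos: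
  assumes "1 \<le> K" "0 \<le> \<eta>" "\<eta> \<le> 1"
  shows "0 < expn_p K \<eta> \<delta> ghat j t"
proof (cases "\<eta> = 1")
  case True
  then show ?thesis using assms by (simp add: expn_p_def)
next
  case False
  then have "0 < (1 - \<eta>) * expn_w ghat \<delta> j t / expn_W K ghat \<delta> t"
    using assms expn_w_pos expn_W_pos by simp
  then show ?thesis
    using assms by (simp add: expn_p_def add_pos_nonneg)
qed

lemma sum_expn_p:
  assumes "1 \<le> K"
  shows "(\<Sum>j\<in>{1..K}. expn_p K \<eta> \<delta> ghat j t) = 1"
proof -
  have "(\<Sum>j\<in>{1..K}. expn_p K \<eta> \<delta> ghat j t)
        = (1 - \<eta>) / expn_W K ghat \<delta> t * (\<Sum>j\<in>{1..K}. expn_w ghat \<delta> j t) + real K * (\<eta> / real K)"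
    by (simp add: expn_p_def sum.distrib sum_distrib_left)
  also have "\<dots> = 1"
    using assms expn_W_pos[OF assms, of ghat \<delta> t] by (simp add: expn_W_def)
  finally show ?thesis .
qed

lemma member_le_one_of_distribution:
  fixes q :: "'a \<Rightarrow> real"
  assumes "finite A" "\<And>j. j \<in> A \<Longrightarrow> 0 \<le> q j" "sum q A = 1" "j \<in> A"
  shows "q j \<le> 1"
  using member_le_sum[of j A q] assms by simp

lemma prod_one_minus_le:
  fixes q l :: "'a \<Rightarrow> real"
  assumes "\<And>i. i \<in> I \<Longrightarrow> l i \<le> q i \<and> q i \<le> 1"
  shows "(\<Prod>i\<in>I. 1 - q i) \<le> (\<Prod>i\<in>I. 1 - l i)"
  using assms by (intro prod_mono) force

lemma expn_p_le_1:
  assumes "1 \<le> K" "0 \<le> \<eta>" "\<eta> \<le> 1" "j \<in> {1..K}"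
  shows "expn_p K \<eta> \<delta> ghat j t \<le> 1"
  using assms sum_expn_p[OF assms(1)] expn_p_pos[OF assms(1-3)]
  by (intro member_le_one_of_distribution[of "{1..K}" "\<lambda>j. expn_p K \<eta> \<delta> ghat j t"])
     (auto intro: less_imp_le)

lemma expn_p'_ge_affine:
  assumes p_le_1: "expn_p K \<eta> \<delta> ghat j t \<le> 1"
    and q_bounds: "\<And>i. i \<in> {1..b} \<Longrightarrow> l i \<le> q i j t \<and> q i j t \<le> 1"
  defines "\<Theta> \<equiv> \<Prod>i\<in>{1..b}. 1 - l i"
  shows "1 - \<Theta> + \<Theta> * expn_p K \<eta> \<delta> ghat j t \<le> expn_p' K b \<eta> \<delta> ghat q j t"
proof -
  have "(\<Prod>i\<in>{1..b}. 1 - q i j t) \<le> \<Theta>"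
    unfolding \<Theta>_def using q_bounds by (rule prod_one_minus_le)
  then have "(1 - expn_p K \<eta> \<delta> ghat j t) * (\<Prod>i\<in>{1..b}. 1 - q i j t)
             \<le> (1 - expn_p K \<eta> \<delta> ghat j t) * \<Theta>"
    using p_le_1 by (simp add: mult_left_mono)
  then show ?thesis
    by (simp add: expn_p'_def algebra_simps)
qed

theorem mainTheorem4:
  fixes K b :: nat and \<eta> \<delta> :: real
    and \<epsilon> :: "nat \<Rightarrow> real"
    and q :: "nat \<Rightarrow> nat \<Rightarrow> nat \<Rightarrow> real"
    and ghat :: "nat \<Rightarrow> nat \<Rightarrow> real"
    and t :: nat
  assumes K_pos: "K \<ge> 1"
    and eta: "0 \<le> \<eta>" "\<eta> \<le> 1"
    and delta: "\<delta> > 0"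
    and ghat_nonneg: "\<And>j s. 0 \<le> ghat j s"
    and eps: "\<And>i. i \<in> {1..b} \<Longrightarrow> 0 < \<epsilon> i \<and> \<epsilon> i \<le> 1"
    and q_distr: "\<And>i s. i \<in> {1..b} \<Longrightarrow> s \<ge> 1 \<Longrightarrow> (\<Sum>j\<in>{1..K}. q i j s) = 1"
    and q_lower: "\<And>i j s. i \<in> {1..b} \<Longrightarrow> j \<in> {1..K} \<Longrightarrow> s \<ge> 1 \<Longrightarrow> q i j s \<ge> \<epsilon> i / real K"
    and t_pos: "t \<ge> 1"
  shows "(\<Sum>j\<in>{1..K}. expn_p K \<eta> \<delta> ghat j t / expn_p' K b \<eta> \<delta> ghat q j t)
           \<le> 1 / (1 - (1 - 1 / real K) * (\<Prod>i\<in>{1..b}. (1 - \<epsilon> i / real K))) + 1"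
proof -
  define \<Theta> where "\<Theta> = (\<Prod>i\<in>{1..b}. 1 - \<epsilon> i / real K)"
  have eps_K: "0 \<le> \<epsilon> i / real K \<and> \<epsilon> i / real K \<le> 1" if "i \<in> {1..b}" for i
    using eps[OF that] K_pos by (simp add: divide_le_eq)
  have q_nonneg: "0 \<le> q i j t" if "i \<in> {1..b}" "j \<in> {1..K}" for i j
    using eps_K[OF that(1)] q_lower[OF that t_pos] by linarith
  have q_bounds: "\<epsilon> i / real K \<le> q i j t \<and> q i j t \<le> 1" if "i \<in> {1..b}" "j \<in> {1..K}" for i j
    using that q_nonneg q_lower[OF _ _ t_pos] q_distr[OF _ t_pos]
    by (auto intro!: member_le_one_of_distribution[of "{1..K}" "\<lambda>j. q i j t"])
  have "0 \<le> \<Theta>" "\<Theta> \<le> 1"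
    unfolding \<Theta>_def using eps_K by (auto intro: prod_nonneg prod_le_1)
  moreover have "1 - \<Theta> + \<Theta> * expn_p K \<eta> \<delta> ghat j t \<le> expn_p' K b \<eta> \<delta> ghat q j t"
    if "j \<in> {1..K}" for j
    unfolding \<Theta>_def using expn_p_le_1[OF K_pos eta that] q_bounds[OF _ that]
    by (rule expn_p'_ge_affine)
  ultimately have "(\<Sum>j\<in>{1..K}. expn_p K \<eta> \<delta> ghat j t / expn_p' K b \<eta> \<delta> ghat q j t)
                   \<le> 1 / (1 - (1 - 1 / real (card {1..K})) * \<Theta>)"
    using K_pos sum_expn_p[OF K_pos] expn_p_pos[OF K_pos eta]
    by (intro sum_div_le_of_affine_lower_bound) auto
  then show ?thesis
    by (simp add: \<Theta>_def)
qed

end
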